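(* Let $k\ge1$ and $n$ be integers and let $a\to b$ be an edge of $G(n,k)$. Then its length $(b-a)_{k+1}$ equals $(n_k-n_{k+1}+2)_{k+1}$ if $b\le n_k-1$, and equals $(n_k-n_{k+1}+1)_{k+1}$ if $b\ge n_k$.
   Context: For an integer $\ell$, $\ell_k$ and $\ell_{k+1}$ (also written $(\ell)_k,(\ell)_{k+1}$) denote the least nonnegative residues of $\ell$ modulo $k$ and $k+1$. $G(n,k)$ is the directed graph on vertices $0,1,\dots,k$ whose edges are exactly the $k$ edges $(i+n-2)_{k+1}\to(i+n-1)_k$, $1\le i\le k$. *)

theory Defs
  imports Main
begin

text \<open>Residues are least nonnegative residues; Isabelle's int mod with positive
  modulus gives exactly these.\<close>
definition G_edges :: "int \<Rightarrow> int \<Rightarrow> (int \<times> int) set" where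
  "G_edges n k = {((i + n - 2) mod (k + 1), (i + n - 1) mod k) | i. 1 \<le> i \<and> i \<le> k}"

end

theory Submission
  imports Defs
begin

text \<open>Modulo \<open>k + 1\<close> we have \<open>-k \<equiv> 1\<close>, so \<open>x mod k - x \<equiv> x div k\<close>; hence the length of the edge
  \<open>(m - 1) mod (k + 1) \<rightarrow> m mod k\<close> is \<open>m div k + 1\<close> and \<open>n mod k - n mod (k + 1) \<equiv> n div k\<close>.
  With \<open>m = n + (i - 1)\<close> and \<open>0 \<le> i - 1 < k\<close>, the quotient \<open>m div k\<close> exceeds \<open>n div k\<close> by the
  carry of \<open>n mod k + (i - 1)\<close>, which is \<open>1\<close> exactly when \<open>m mod k\<close> wraps around below \<open>n mod k\<close>.\<close>

lemma mod_diff_mod_Suc_modulus: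
  fixes x k :: int
  shows "(x mod k - x mod (k + 1)) mod (k + 1) = x div k mod (k + 1)"
proof -
  have "x mod k - x mod (k + 1) = x div k + (k + 1) * (x div (k + 1) - x div k)"
    using div_mult_mod_eq [of x k] div_mult_mod_eq [of x "k + 1"] by (simp add: algebra_simps)
  then show ?thesis
    by simp
qed

lemma G_edge_length_mod:
  fixes x k :: int
  shows "(x mod k - (x - 1) mod (k + 1)) mod (k + 1) = (x div k + 1) mod (k + 1)"
proof -
  have "(x mod k - (x - 1) mod (k + 1)) mod (k + 1) = (x mod k - (x - 1)) mod (k + 1)"
    by (rule mod_diff_right_eq)
  also have "\<dots> = (x mod k + 1 - x) mod (k + 1)"
    by (simp add: algebra_simps)
  also have "\<dots> = (x mod k + 1 - x mod (k + 1)) mod (k + 1)"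
    by (rule mod_diff_right_eq [symmetric])
  also have "\<dots> = (x mod k - x mod (k + 1) + 1) mod (k + 1)"
    by (simp add: algebra_simps)
  also have "\<dots> = (x div k + 1) mod (k + 1)"
    using mod_diff_mod_Suc_modulus [of x k] by (metis mod_add_left_eq)
  finally show ?thesis .
qed

lemma add_small_mod_cases:
  fixes n j k :: int
  assumes "0 \<le> j" "j < k"
  obtains "n mod k + j < k" "(n + j) mod k = n mod k + j" "(n + j) div k = n div k"
    | "k \<le> n mod k + j" "(n + j) mod k = n mod k + j - k" "(n + j) div k = n div k + 1"
proof -
  have "j div k = 0" "j mod k = j"
    using assms by simp_all
  then have carry: "(n + j) div k = n div k + (n mod k + j) div k"
    using div_add1_eq [of n j k] by simp
  have remainder: "(n + j) mod k = (n mod k + j) mod k"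
    by (simp add: mod_add_left_eq)
  have "0 \<le> n mod k" "n mod k < k"
    using assms by simp_all
  show ?thesis
  proof (cases "n mod k + j < k")
    case True
    then show ?thesis
      using that(1) carry remainder \<open>0 \<le> n mod k\<close> assms by simp
  next
    case False
    then have "0 \<le> n mod k + j - k" "n mod k + j - k < k"
      using \<open>n mod k < k\<close> assms by linarith+
    moreover have "0 < k" "k \<le> n mod k + j"
      using False assms by linarith+
    ultimately have "(n mod k + j) div k = 1" "(n mod k + j) mod k = n mod k + j - k"
      by (simp_all only: div_pos_geq mod_pos_geq div_pos_pos_trivial mod_pos_pos_trivial)
    then show ?thesis
      using that(2) False carry remainder by simp
  qed
qed

theorem lemma7p4:
  fixes n k a b :: int
  assumes "k \<ge> 1"
    and "(a, b) \<in> G_edges n k"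
  shows "(b \<le> n mod k - 1 \<longrightarrow> (b - a) mod (k + 1) = (n mod k - n mod (k + 1) + 2) mod (k + 1))
       \<and> (b \<ge> n mod k \<longrightarrow> (b - a) mod (k + 1) = (n mod k - n mod (k + 1) + 1) mod (k + 1))"
proof -
  obtain i where i: "1 \<le> i" "i \<le> k" and a: "a = (n + (i - 1) - 1) mod (k + 1)"
    and b: "b = (n + (i - 1)) mod k"
    using assms(2) unfolding G_edges_def by (auto simp: algebra_simps)
  have length: "(b - a) mod (k + 1) = ((n + (i - 1)) div k + 1) mod (k + 1)"
    unfolding a b by (rule G_edge_length_mod)
  have target: "(n mod k - n mod (k + 1) + c) mod (k + 1) = (n div k + c) mod (k + 1)" for c
    using mod_diff_mod_Suc_modulus [of n k] by (metis mod_add_left_eq)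
  from i obtain "0 \<le> i - 1" "i - 1 < k"
    by simp
  then show ?thesis
  proof (cases rule: add_small_mod_cases [where n = n])
    case 1
    then show ?thesis
      using length target [of 1] b i by simp
  next
    case 2
    then show ?thesis
      using length target [of 2] b i by (simp add: add.assoc)
  qed
qed

end
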